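(* Let $X$ be a set, $F:\mathcal{P}(X)\to\mathcal{P}(X)$ an interior operator, and $\kappa$ a cardinal. If the complete sup-lattice $(\mathbf{Fix}(F),\subseteq,\bigcup)$ has a basis indexed by a set of cardinality $\kappa$, then $F$ has a resolution whose interpolant $Y$ has cardinality $\kappa$, i.e. there exist a set $Y$ with $|Y|=\kappa$ and a relation $r\subseteq X\times Y$ such that $F=\langle r\rangle\circ[r^{\sim}]$.
   Context: An interior operator on $\mathcal{P}(X)$ is a map $F$ that is monotonic, contractive ($F(U)\subseteq U$), and satisfies $F(U)\subseteq F(F(U))$; $\mathbf{Fix}(F)=\{U\subseteq X\mid F(U)=U\}$, which is closed under arbitrary unions. A basis of a complete sup-lattice $(L,\leq,\bigvee)$ is a family $(x_i)_{i\in I}$ of elements of $L$ such that for every $y\in L$, $y=\bigvee\{x_i\mid x_i\leq y\}$; it is indexed by $I$. For $r\subseteq X\times Y$, $r^{\sim}=\{(y,x)\mid (x,y)\in r\}$. For $t\subseteq A\times B$, $\langle t\rangle,[t]:\mathcal{P}(B)\to\mathcal{P}(A)$ are $\langle t\rangle(V)=\{a\mid \exists b,\ (a,b)\in t\wedge b\in V\}$ and $[t](V)=\{a\mid \forall b,\ (a,b)\in t\Rightarrow b\in V\}$. *)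

theory Defs
  imports Main "HOL-Library.Equipollence"
begin

text \<open>Interior operator on the powerset of X (values of F outside Pow X are irrelevant).\<close>
definition interior_operator :: "'a set \<Rightarrow> ('a set \<Rightarrow> 'a set) \<Rightarrow> bool" where
  "interior_operator X F \<longleftrightarrow>
     (\<forall>U\<in>Pow X. F U \<subseteq> X) \<and>
     (\<forall>U V. U \<subseteq> V \<and> V \<subseteq> X \<longrightarrow> F U \<subseteq> F V) \<and>
     (\<forall>U\<in>Pow X. F U \<subseteq> U) \<and>
     (\<forall>U\<in>Pow X. F U \<subseteq> F (F U))"

definition Fix :: "'a set \<Rightarrow> ('a set \<Rightarrow> 'a set) \<Rightarrow> 'a set set" where
  "Fix X F = {U. U \<subseteq> X \<and> F U = U}"

definition is_basis :: "'a set set \<Rightarrow> 'i set \<Rightarrow> ('i \<Rightarrow> 'a set) \<Rightarrow> bool" where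
  "is_basis L I b \<longleftrightarrow> (\<forall>i\<in>I. b i \<in> L) \<and>
     (\<forall>y\<in>L. y = \<Union>{b i | i. i \<in> I \<and> b i \<subseteq> y})"

definition diam :: "'a set \<Rightarrow> ('a \<times> 'b) set \<Rightarrow> 'b set \<Rightarrow> 'a set" where
  "diam A t V = {a\<in>A. \<exists>b. (a, b) \<in> t \<and> b \<in> V}"

definition box :: "'a set \<Rightarrow> ('a \<times> 'b) set \<Rightarrow> 'b set \<Rightarrow> 'a set" where
  "box A t V = {a\<in>A. \<forall>b. (a, b) \<in> t \<longrightarrow> b \<in> V}"

end

theory Submission
  imports Defs
begin

text \<open>Take the basis itself as interpolant and relate x to i when x \<in> b i. Then
  \<open>[r\<^sup>\<sim>] U\<close> is the set of basic opens contained in U and \<open>\<langle>r\<rangle>\<close> takes their union.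
  Since b i is a fixed point, b i \<subseteq> U iff b i \<subseteq> F U, so this union is the union of
  the basic opens below F U, which is F U because F U is a fixed point.\<close>

lemma interior_operator_in_Fix:
  assumes "interior_operator X F" and "U \<subseteq> X"
  shows "F U \<in> Fix X F"
proof -
  have "F U \<subseteq> U" "F U \<subseteq> X" "F U \<subseteq> F (F U)"
    using assms unfolding interior_operator_def by auto
  moreover have "F (F U) \<subseteq> F U"
    using assms(1) \<open>F U \<subseteq> X\<close> unfolding interior_operator_def by auto
  ultimately show ?thesis unfolding Fix_def by auto
qed

lemma interior_operator_Fix_subset_iff:
  assumes "interior_operator X F" and "V \<in> Fix X F" and "U \<subseteq> X"
  shows "V \<subseteq> F U \<longleftrightarrow> V \<subseteq> U"
proof
  assume "V \<subseteq> F U"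
  moreover have "F U \<subseteq> U" using assms(1,3) unfolding interior_operator_def by auto
  ultimately show "V \<subseteq> U" by blast
next
  assume "V \<subseteq> U"
  then have "F V \<subseteq> F U" using assms(1,3) unfolding interior_operator_def by blast
  then show "V \<subseteq> F U" using assms(2) unfolding Fix_def by simp
qed

lemma is_basis_in: "is_basis L I b \<Longrightarrow> i \<in> I \<Longrightarrow> b i \<in> L"
  unfolding is_basis_def by (elim conjE) (rule bspec)

lemma is_basis_Union:
  "is_basis L I b \<Longrightarrow> y \<in> L \<Longrightarrow> y = \<Union>{b i | i. i \<in> I \<and> b i \<subseteq> y}"
  unfolding is_basis_def by (elim conjE) (rule bspec)

lemma interior_operator_eq_Union_basis:
  assumes "interior_operator X F" and "is_basis (Fix X F) I b" and "U \<subseteq> X"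
  shows "F U = \<Union>{b i | i. i \<in> I \<and> b i \<subseteq> U}"
proof -
  have "F U \<in> Fix X F"
    using assms(1,3) by (rule interior_operator_in_Fix)
  with is_basis_Union[OF assms(2)]
  have "F U = \<Union>{b i | i. i \<in> I \<and> b i \<subseteq> F U}" .
  also have "{b i | i. i \<in> I \<and> b i \<subseteq> F U} = {b i | i. i \<in> I \<and> b i \<subseteq> U}"
  proof -
    have "b i \<subseteq> F U \<longleftrightarrow> b i \<subseteq> U" if "i \<in> I" for i
      using assms(1) is_basis_in[OF assms(2) that] assms(3)
      by (rule interior_operator_Fix_subset_iff)
    then show ?thesis by blast
  qed
  finally show ?thesis .
qed

definition membership_rel :: "'i set \<Rightarrow> ('i \<Rightarrow> 'a set) \<Rightarrow> ('a \<times> 'i) set" where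
  "membership_rel I b = {(x, i). i \<in> I \<and> x \<in> b i}"

lemma membership_rel_subset:
  assumes "\<And>i. i \<in> I \<Longrightarrow> b i \<subseteq> X"
  shows "membership_rel I b \<subseteq> X \<times> I"
  using assms unfolding membership_rel_def by auto

lemma diam_box_membership_rel:
  assumes "\<And>i. i \<in> I \<Longrightarrow> b i \<subseteq> X"
  shows "diam X (membership_rel I b) (box I ((membership_rel I b)\<inverse>) U)
           = \<Union>{b i | i. i \<in> I \<and> b i \<subseteq> U}"
  using assms unfolding diam_def box_def membership_rel_def by blast

theorem corollary2:
  fixes X :: "'a set" and F :: "'a set \<Rightarrow> 'a set"
    and I :: "'i set" and b :: "'i \<Rightarrow> 'a set"
  assumes "interior_operator X F"
    and "is_basis (Fix X F) I b"
  shows "\<exists>(Y :: 'i set) (r :: ('a \<times> 'i) set).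
           Y \<approx> I \<and> r \<subseteq> X \<times> Y \<and>
           (\<forall>U. U \<subseteq> X \<longrightarrow> F U = diam X r (box Y (r\<inverse>) U))"
proof -
  have basis_subset: "\<And>i. i \<in> I \<Longrightarrow> b i \<subseteq> X"
    using is_basis_in[OF assms(2)] unfolding Fix_def by blast
  define r where "r = membership_rel I b"
  have "F U = diam X r (box I (r\<inverse>) U)" if "U \<subseteq> X" for U
    using interior_operator_eq_Union_basis[OF assms that]
      diam_box_membership_rel[of I b X U] basis_subset
    unfolding r_def by simp
  with membership_rel_subset[of I b X] basis_subset show ?thesis
    by (intro exI[of _ I] exI[of _ r]) (auto simp: r_def)
qed

end
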